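(* A distributional factorization satisfying the DIGM principle does not guarantee the RIGM principle. Precisely: there exist a number of agents $N$, finite action sets, a distributional factorization $\Phi$, per-agent return distributions $[Z_i(\tau_i,u_i)]_{i=1}^N$ and a risk metric $\psi_\alpha$ (which can be taken to be a Value-at-Risk metric $\mathrm{VaR}_\alpha$) such that $[Z_i]_{i=1}^N$ satisfy DIGM for $Z_{jt}(\boldsymbol\tau,\boldsymbol u)=\Phi(Z_1(\tau_1,u_1),\dots,Z_N(\tau_N,u_N))$, but $[Z_i]_{i=1}^N$ do not satisfy RIGM for $Z_{jt}$ with risk metric $\psi_\alpha$.
   Context: There are $N$ agents; agent $i$ has observation history $\tau_i$ and a finite action set $U_i$; $\boldsymbol\tau=(\tau_1,\dots,\tau_N)$, $\boldsymbol u=(u_1,\dots,u_N)$. Return distributions are real random variables. For a real random variable $Z$ with CDF $F_Z$, its quantile function is $\theta_Z(\omega)=\inf\{z\in\mathbb{R}:\omega\le F_Z(z)\}$, $\omega\in(0,1]$, and $\mathrm{VaR}_\alpha(Z)=\theta_Z(\alpha)$. RIGM: given a risk metric $\psi_\alpha$, per-agent return distributions $[Z_i(\tau_i,u_i)]$ satisfy RIGM for a joint return distribution $Z_{jt}(\boldsymbol\tau,\boldsymbol u)$ with $\psi_\alpha$ under $\boldsymbol\tau$ if $\arg\max_{\boldsymbol u}\psi_\alpha[Z_{jt}(\boldsymbol\tau,\boldsymbol u)]=(\arg\max_{u_1}\psi_\alpha[Z_1(\tau_1,u_1)],\dots,\arg\max_{u_N}\psi_\alpha[Z_N(\tau_N,u_N)])$.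 DIGM is RIGM with $\psi_\alpha$ replaced by the expectation $\mathbb{E}$. Argmax sets are assumed to be singletons (ties broken by smallest index). *)

theory Defs
  imports "HOL-Probability.Probability"
begin

definition is_return_dist :: "real measure \<Rightarrow> bool" where
  "is_return_dist M \<longleftrightarrow> prob_space M \<and> sets M = sets borel \<and> integrable M (\<lambda>x. x)"

definition expect :: "real measure \<Rightarrow> real" where
  "expect M = integral\<^sup>L M (\<lambda>x. x)"

definition cdf_of :: "real measure \<Rightarrow> real \<Rightarrow> real" where
  "cdf_of M z = measure M {..z}"

definition quantile :: "real measure \<Rightarrow> real \<Rightarrow> real" where
  "quantile M \<omega> = Inf {z. \<omega> \<le> cdf_of M z}"

definition VaR :: "real \<Rightarrow> real measure \<Rightarrow> real" where
  "VaR \<alpha> M = quantile M \<alpha>"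

text \<open>Agents are 0..<N; joint actions/histories are lists of length N.\<close>
definition joint_actions :: "nat \<Rightarrow> (nat \<Rightarrow> nat set) \<Rightarrow> nat list set" where
  "joint_actions N U = {us. length us = N \<and> (\<forall>i<N. us ! i \<in> U i)}"

definition argmax_set :: "('a \<Rightarrow> real) \<Rightarrow> 'a set \<Rightarrow> 'a set" where
  "argmax_set f A = {a \<in> A. \<forall>b \<in> A. f b \<le> f a}"

definition joint_dist ::
  "(real measure list \<Rightarrow> real measure) \<Rightarrow> nat \<Rightarrow> (nat \<Rightarrow> nat \<Rightarrow> nat \<Rightarrow> real measure)
     \<Rightarrow> nat list \<Rightarrow> nat list \<Rightarrow> real measure" where
  "joint_dist \<Phi> N Z \<tau>s us = \<Phi> (map (\<lambda>i. Z i (\<tau>s ! i) (us ! i)) [0..<N])"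

text \<open>The IGM-type condition for a metric psi under joint history taus
  (argmax sets are singletons by the standing assumption, so equality of argmax sets
   is equality of the argmax actions).\<close>
definition IGM_wrt ::
  "(real measure \<Rightarrow> real) \<Rightarrow> nat \<Rightarrow> (nat \<Rightarrow> nat set) \<Rightarrow> (nat \<Rightarrow> nat \<Rightarrow> nat \<Rightarrow> real measure)
     \<Rightarrow> (nat list \<Rightarrow> real measure) \<Rightarrow> nat list \<Rightarrow> bool" where
  "IGM_wrt \<psi> N U Z Zjt \<tau>s \<longleftrightarrow>
     argmax_set (\<lambda>us. \<psi> (Zjt us)) (joint_actions N U) =
     {us \<in> joint_actions N U. \<forall>i<N. us ! i \<in> argmax_set (\<lambda>a. \<psi> (Z i (\<tau>s ! i) a)) (U i)}"

definition RIGM where "RIGM \<alpha> \<psi> = IGM_wrt (\<psi> \<alpha>)"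
definition DIGM where "DIGM = IGM_wrt expect"

definition argmax_unique ::
  "(real measure \<Rightarrow> real) \<Rightarrow> nat \<Rightarrow> (nat \<Rightarrow> nat set) \<Rightarrow> (nat \<Rightarrow> nat \<Rightarrow> nat \<Rightarrow> real measure)
     \<Rightarrow> (nat list \<Rightarrow> real measure) \<Rightarrow> nat list \<Rightarrow> bool" where
  "argmax_unique \<psi> N U Z Zjt \<tau>s \<longleftrightarrow>
     (\<exists>!us. us \<in> argmax_set (\<lambda>us. \<psi> (Zjt us)) (joint_actions N U)) \<and>
     (\<forall>i<N. \<exists>!a. a \<in> argmax_set (\<lambda>a. \<psi> (Z i (\<tau>s ! i) a)) (U i))"

end

theory Submission
  imports Defs
begin

text \<open>One agent with two actions: action 0 pays 1 for sure, action 1 pays 0 for sure.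
  The factorization replaces a return of mean m by the fair coin on -m and 3m. This
  preserves means, so DIGM holds, but the spread grows with the mean: the joint VaR at
  level 1/2 is -m, which reverses the ranking of the two actions, so RIGM fails.\<close>

lemma is_return_dist_return: "is_return_dist (return borel (c::real))"
proof -
  interpret prob_space "return borel c"
    by (rule prob_space_return) simp
  have "integrable (return borel c) (\<lambda>x. x)"
    by (rule integrable_const_bound[where B = "\<bar>c\<bar>"]) (simp_all add: AE_return)
  then show ?thesis
    unfolding is_return_dist_def by (simp add: prob_space_axioms)
qed

lemma expect_return: "expect (return borel c) = c"
  by (simp add: expect_def integral_return)

lemma VaR_return:
  assumes "0 < \<alpha>" "\<alpha> \<le> 1"
  shows "VaR \<alpha> (return borel c) = c"
proof -
  have "{z. \<alpha> \<le> cdf_of (return borel c) z} = {c..}"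
    using assms by (auto simp: cdf_of_def measure_return split: split_indicator)
  then show ?thesis
    by (simp add: VaR_def quantile_def)
qed

definition fair_coin :: "real \<Rightarrow> real \<Rightarrow> real measure" where
  "fair_coin lo hi = distr (measure_pmf (bernoulli_pmf (1/2))) borel (\<lambda>b. if b then hi else lo)"

lemma is_return_dist_fair_coin: "is_return_dist (fair_coin lo hi)"
  unfolding is_return_dist_def fair_coin_def
  by (auto intro!: measure_pmf.prob_space_distr integrable_measure_pmf_finite
           simp: integrable_distr_eq)

lemma expect_fair_coin: "expect (fair_coin lo hi) = (lo + hi) / 2"
  unfolding expect_def fair_coin_def
  by (simp add: integral_distr integral_measure_pmf_real[where A = UNIV] UNIV_bool)

lemma cdf_of_fair_coin:
  assumes "lo \<le> hi"
  shows "cdf_of (fair_coin lo hi) z = (if z < lo then 0 else if z < hi then 1/2 else 1)"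
proof -
  have "(\<lambda>b. if b then hi else lo) -` {..z} =
        (if z < lo then {} else if z < hi then {False} else UNIV)"
    using assms by (auto split: if_splits)
  then show ?thesis
    unfolding cdf_of_def fair_coin_def by (simp add: measure_distr measure_pmf_single)
qed

lemma VaR_fair_coin:
  assumes "lo \<le> hi" "0 < \<alpha>" "\<alpha> \<le> 1/2"
  shows "VaR \<alpha> (fair_coin lo hi) = lo"
proof -
  have "{z. \<alpha> \<le> cdf_of (fair_coin lo hi) z} = {lo..}"
    using assms by (auto simp: cdf_of_fair_coin)
  then show ?thesis
    by (simp add: VaR_def quantile_def)
qed

lemma argmax_set_image: "argmax_set f (g ` A) = g ` argmax_set (f \<circ> g) A"
  by (auto simp: argmax_set_def)

lemma argmax_set_pair: "f b < f a \<Longrightarrow> argmax_set f {a, b} = {a}"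
  by (auto simp: argmax_set_def)

lemma joint_actions_one: "joint_actions 1 U = (\<lambda>a. [a]) ` U 0"
proof -
  have "us \<in> joint_actions 1 U \<longleftrightarrow> (\<exists>a \<in> U 0. us = [a])" for us
    by (cases us) (auto simp: joint_actions_def)
  then show ?thesis
    by blast
qed

lemma joint_dist_one: "joint_dist \<Phi> 1 Z \<tau>s us = \<Phi> [Z 0 (\<tau>s ! 0) (us ! 0)]"
  by (simp add: joint_dist_def)

lemma IGM_wrt_joint_dist_one:
  "IGM_wrt \<psi> 1 U Z (joint_dist \<Phi> 1 Z \<tau>s) \<tau>s \<longleftrightarrow>
     argmax_set (\<lambda>a. \<psi> (\<Phi> [Z 0 (\<tau>s ! 0) a])) (U 0) =
     argmax_set (\<lambda>a. \<psi> (Z 0 (\<tau>s ! 0) a)) (U 0)"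
proof -
  have "{us \<in> (\<lambda>a. [a]) ` U 0. \<forall>i<1. us ! i \<in> argmax_set (\<lambda>a. \<psi> (Z i (\<tau>s ! i) a)) (U i)} =
        (\<lambda>a. [a]) ` argmax_set (\<lambda>a. \<psi> (Z 0 (\<tau>s ! 0) a)) (U 0)"
    by (auto simp: argmax_set_def)
  moreover have "inj (\<lambda>a::nat. [a])"
    by (simp add: inj_def)
  ultimately show ?thesis
    unfolding IGM_wrt_def joint_actions_one argmax_set_image
    by (simp add: comp_def joint_dist_def
                  inj_image_eq_iff)
qed

lemma argmax_unique_joint_dist_one:
  "argmax_unique \<psi> 1 U Z (joint_dist \<Phi> 1 Z \<tau>s) \<tau>s \<longleftrightarrow>
     (\<exists>!a. a \<in> argmax_set (\<lambda>a. \<psi> (\<Phi> [Z 0 (\<tau>s ! 0) a])) (U 0)) \<and>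
     (\<exists>!a. a \<in> argmax_set (\<lambda>a. \<psi> (Z 0 (\<tau>s ! 0) a)) (U 0))"
  unfolding argmax_unique_def joint_actions_one argmax_set_image
  by (auto simp: comp_def joint_dist_def)

definition point_returns :: "nat \<Rightarrow> nat \<Rightarrow> nat \<Rightarrow> real measure" where
  "point_returns i t a = return borel (if a = 0 then 1 else 0)"

definition mean_scaled_spread :: "real measure list \<Rightarrow> real measure" where
  "mean_scaled_spread ms = fair_coin (- expect (hd ms)) (3 * expect (hd ms))"

lemma expect_point_returns: "expect (point_returns i t a) = (if a = 0 then 1 else 0)"
  by (simp add: point_returns_def expect_return)

lemma VaR_point_returns:
  "0 < \<alpha> \<Longrightarrow> \<alpha> \<le> 1 \<Longrightarrow> VaR \<alpha> (point_returns i t a) = (if a = 0 then 1 else 0)"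
  by (simp add: point_returns_def VaR_return)

lemma expect_mean_scaled_spread: "expect (mean_scaled_spread [m]) = expect m"
  by (simp add: mean_scaled_spread_def expect_fair_coin)

lemma VaR_mean_scaled_spread:
  "0 \<le> expect m \<Longrightarrow> 0 < \<alpha> \<Longrightarrow> \<alpha> \<le> 1/2 \<Longrightarrow> VaR \<alpha> (mean_scaled_spread [m]) = - expect m"
  by (simp add: mean_scaled_spread_def VaR_fair_coin)

lemma argmax_expect_point_returns:
  "argmax_set (\<lambda>a. expect (point_returns i t a)) {0, 1} = {0}"
  by (simp add: argmax_set_pair expect_point_returns)

lemma argmax_VaR_point_returns:
  "0 < \<alpha> \<Longrightarrow> \<alpha> \<le> 1 \<Longrightarrow> argmax_set (\<lambda>a. VaR \<alpha> (point_returns i t a)) {0, 1} = {0}"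
  by (simp add: argmax_set_pair VaR_point_returns)

lemma argmax_expect_mean_scaled_spread:
  "argmax_set (\<lambda>a. expect (mean_scaled_spread [point_returns i t a])) {0, 1} = {0}"
  by (simp add: argmax_set_pair expect_mean_scaled_spread expect_point_returns)

lemma argmax_VaR_mean_scaled_spread:
  assumes "0 < \<alpha>" "\<alpha> \<le> 1/2"
  shows "argmax_set (\<lambda>a. VaR \<alpha> (mean_scaled_spread [point_returns i t a])) {0, 1} = {1}"
  unfolding insert_commute[of 0 1]
  using assms by (simp add: argmax_set_pair VaR_mean_scaled_spread expect_point_returns)

theorem theorem2:
  shows "\<exists>(N::nat) (U::nat \<Rightarrow> nat set) (\<Phi>::real measure list \<Rightarrow> real measure)
            (Z::nat \<Rightarrow> nat \<Rightarrow> nat \<Rightarrow> real measure) (\<alpha>::real).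
     N \<ge> 1 \<and> (\<forall>i<N. finite (U i) \<and> U i \<noteq> {}) \<and> 0 < \<alpha> \<and> \<alpha> \<le> 1 \<and>
     (\<forall>i<N. \<forall>t a. a \<in> U i \<longrightarrow> is_return_dist (Z i t a)) \<and>
     (\<forall>\<tau>s us. length \<tau>s = N \<longrightarrow> us \<in> joint_actions N U \<longrightarrow>
         is_return_dist (joint_dist \<Phi> N Z \<tau>s us)) \<and>
     (\<forall>\<tau>s. length \<tau>s = N \<longrightarrow>
         argmax_unique expect N U Z (joint_dist \<Phi> N Z \<tau>s) \<tau>s \<and>
         argmax_unique (VaR \<alpha>) N U Z (joint_dist \<Phi> N Z \<tau>s) \<tau>s) \<and>
     (\<forall>\<tau>s. length \<tau>s = N \<longrightarrow> DIGM N U Z (joint_dist \<Phi> N Z \<tau>s) \<tau>s) \<and>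
     (\<exists>\<tau>s. length \<tau>s = N \<and> \<not> RIGM \<alpha> VaR N U Z (joint_dist \<Phi> N Z \<tau>s) \<tau>s)"
proof -
  let ?U = "\<lambda>_::nat. {0, 1::nat}" and ?\<alpha> = "1/2 :: real"
  let ?Zjt = "joint_dist mean_scaled_spread 1 point_returns"
  note One_nat_def [simp del] \<comment> \<open>keeps the action 1 and the agent count 1 from becoming Suc 0\<close>
  have "is_return_dist (?Zjt \<tau>s us)" for \<tau>s us
    unfolding joint_dist_one mean_scaled_spread_def by (rule is_return_dist_fair_coin)
  moreover have "is_return_dist (point_returns i t a)" for i t a
    by (simp add: point_returns_def is_return_dist_return)
  moreover have "argmax_unique expect 1 ?U point_returns (?Zjt \<tau>s) \<tau>s" for \<tau>s
    by (simp add: argmax_unique_joint_dist_one argmax_expect_point_returns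
                  argmax_expect_mean_scaled_spread)
  moreover have "argmax_unique (VaR ?\<alpha>) 1 ?U point_returns (?Zjt \<tau>s) \<tau>s" for \<tau>s
    by (simp add: argmax_unique_joint_dist_one argmax_VaR_point_returns
                  argmax_VaR_mean_scaled_spread)
  moreover have "DIGM 1 ?U point_returns (?Zjt \<tau>s) \<tau>s" for \<tau>s
    by (simp add: DIGM_def IGM_wrt_joint_dist_one argmax_expect_point_returns
                  argmax_expect_mean_scaled_spread)
  moreover have "\<not> RIGM ?\<alpha> VaR 1 ?U point_returns (?Zjt [0]) [0]"
    by (simp add: RIGM_def IGM_wrt_joint_dist_one argmax_VaR_point_returns
                  argmax_VaR_mean_scaled_spread)
  ultimately show ?thesis
    by (intro exI[of _ 1] exI[of _ ?U] exI[of _ mean_scaled_spread] exI[of _ point_returns]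
              exI[of _ ?\<alpha>] conjI allI impI exI[of _ "[0]"]) auto
qed

end
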